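(* (i) $R_{\mathcal{S}^*_{Ne}}(\mathcal{S}^*_{RL})=\dfrac{56}{122-41\sqrt2}$. (ii) $R_{\mathcal{S}^*_{Ne}}(\mathcal{S}^*_{C})=\sqrt2-1$. (iii) $R_{\mathcal{S}^*_{Ne}}(\mathcal{S}^*_{R})=\dfrac{1}{3\sqrt2-3}$. Each radius is sharp, i.e. it is the exact value of the radius.
   Context: $\mathbb{D}=\{|z|<1\}$, $\mathbb{D}_r=\{|z|<r\}$. $\mathcal{A}$ is the class of analytic $f$ on $\mathbb{D}$ with $f(0)=0$, $f'(0)=1$; for $f\in\mathcal{A}$ let $\mathcal{Q}_f(z)=zf'(z)/f(z)$. For analytic $F,G$ on $\mathbb{D}$, $F\prec G$ means $F=G\circ w$ for some analytic $w:\mathbb{D}\to\mathbb{D}$ with $w(0)=0$. For analytic $\varphi$ on $\mathbb{D}$, $\mathcal{S}^*(\varphi)=\{f\in\mathcal{A}:\mathcal{Q}_f\prec\varphi\}$. Let $\varphi_{Ne}(z)=1+z-z^3/3$ (univalent on $\mathbb{D}$), $\Omega_{Ne}=\varphi_{Ne}(\mathbb{D})$, $\mathcal{S}^*_{Ne}=\mathcal{S}^*(\varphi_{Ne})$. For $\mathcal{G}\subset\mathcal{A}$, $R_{\mathcal{S}^*_{Ne}}(\mathcal{G})$ is the largest $\rho\in(0,1]$ such that $\mathcal{Q}_f(\mathbb{D}_\rho)\subseteq\Omega_{Ne}$ for all $f\in\mathcal{G}$ (equivalently $r^{-1}f(rz)\in\mathcal{S}^*_{Ne}$ for all $f\in\mathcal{G}$,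 $0<r\le\rho$). Classes: $\mathcal{S}^*_{RL}=\mathcal{S}^*(\varphi_{RL})$ with $\varphi_{RL}(z)=\sqrt2-(\sqrt2-1)\sqrt{\frac{1-z}{1+2(\sqrt2-1)z}}$ (principal branch); $\mathcal{S}^*_C=\mathcal{S}^*\big(1+\frac43 z+\frac23 z^2\big)$; $\mathcal{S}^*_R=\mathcal{S}^*(\varphi_0)$ with $\varphi_0(z)=1+\frac{z}{k}\cdot\frac{k+z}{k-z}$, $k=\sqrt2+1$. *)

theory Defs
  imports "HOL-Analysis.Analysis"
begin

definition classA :: "(complex \<Rightarrow> complex) set" where
  "classA = {f. f holomorphic_on ball 0 1 \<and> f 0 = 0 \<and> deriv f 0 = 1}"

text \<open>Q_f(z) = z f'(z)/f(z), with its removable value 1 at the origin.\<close>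
definition Qf :: "(complex \<Rightarrow> complex) \<Rightarrow> complex \<Rightarrow> complex" where
  "Qf f z = (if z = 0 then 1 else z * deriv f z / f z)"

definition subord :: "(complex \<Rightarrow> complex) \<Rightarrow> (complex \<Rightarrow> complex) \<Rightarrow> bool" where
  "subord F G \<longleftrightarrow> F holomorphic_on ball 0 1 \<and> G holomorphic_on ball 0 1 \<and>
     (\<exists>w. w holomorphic_on ball 0 1 \<and> w ` ball 0 1 \<subseteq> ball 0 1 \<and> w 0 = 0 \<and>
          (\<forall>z\<in>ball 0 1. F z = G (w z)))"

definition Sstar :: "(complex \<Rightarrow> complex) \<Rightarrow> (complex \<Rightarrow> complex) set" where
  "Sstar \<phi> = {f \<in> classA. subord (Qf f) \<phi>}"

definition phiNe :: "complex \<Rightarrow> complex" where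
  "phiNe z = 1 + z - z ^ 3 / 3"

definition OmegaNe :: "complex set" where
  "OmegaNe = phiNe ` ball 0 1"

definition radiusNe :: "(complex \<Rightarrow> complex) set \<Rightarrow> real" where
  "radiusNe G = (GREATEST \<rho>. \<rho> \<in> {0<..1} \<and> (\<forall>f\<in>G. Qf f ` ball 0 \<rho> \<subseteq> OmegaNe))"

definition phiRL :: "complex \<Rightarrow> complex" where
  "phiRL z = complex_of_real (sqrt 2) - complex_of_real (sqrt 2 - 1) *
     csqrt ((1 - z) / (1 + 2 * complex_of_real (sqrt 2 - 1) * z))"

definition phiC :: "complex \<Rightarrow> complex" where
  "phiC z = 1 + 4/3 * z + 2/3 * z ^ 2"

definition phi0 :: "complex \<Rightarrow> complex" where
  "phi0 z = (let k = complex_of_real (sqrt 2 + 1) in 1 + (z / k) * ((k + z) / (k - z)))"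

end

theory Submission
  imports Defs "HOL-Complex_Analysis.Complex_Analysis"
begin

(* By Schwarz's lemma Qf f maps the disc of radius r into phi of that disc for every f in S*(phi),
   and the function with Qf f = phi belongs to S*(phi); so the radius is the largest R with
   phi(D_R) inside Omega_Ne. The domain Omega_Ne contains the disc |w - 1| < 2/3 (its boundary is the
   image of the unit circle, which stays at distance at least 2/3 from 1) and meets the real axis
   exactly in ]1/3, 5/3[. In each of the three cases phi(D_R) lies in that disc, while on the real
   axis phi leaves ]1/3, 5/3[ just beyond |z| = R. *)

section \<open>The domain \<Omega>\<close>

lemma phiNe_holomorphic: "phiNe holomorphic_on S"
  unfolding phiNe_def[abs_def] by (intro holomorphic_intros) auto

lemma open_OmegaNe: "open OmegaNe"
proof -
  have "phiNe 0 \<noteq> phiNe (1/2)"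
    by (simp add: phiNe_def power3_eq_cube)
  moreover have "(1/2 :: complex) \<in> ball 0 1"
    by simp
  ultimately have "\<not> phiNe constant_on ball 0 1"
    unfolding constant_on_def by (metis centre_in_ball zero_less_one)
  then show ?thesis
    unfolding OmegaNe_def by (intro open_mapping_thm[OF phiNe_holomorphic]) auto
qed

lemma norm_phiNe_minus_one_on_circle:
  assumes "norm v = 1"
  shows "2/3 \<le> norm (phiNe v - 1)"
proof -
  have "phiNe v - 1 = v * (1 - v^2/3)"
    by (simp add: phiNe_def algebra_simps power3_eq_cube power2_eq_square)
  moreover have "norm (1::complex) - norm (v^2/3) \<le> norm (1 - v^2/3)"
    by (rule norm_triangle_ineq2)
  ultimately show ?thesis
    using assms by (simp add: norm_mult norm_power norm_divide)
qed

text \<open>The boundary of \<Omega> lies in the image of the unit circle, which avoids the disc;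
  so the connected disc, meeting \<Omega> at 1, cannot leave it.\<close>
lemma ball_subset_OmegaNe: "ball 1 (2/3) \<subseteq> OmegaNe"
proof -
  define V where "V = - (phiNe ` cball 0 1)"
  have "open V"
    unfolding V_def using phiNe_holomorphic holomorphic_on_imp_continuous_on
    by (intro open_Compl compact_imp_closed compact_continuous_image compact_cball) blast
  have cover: "ball 1 (2/3) \<subseteq> OmegaNe \<union> V"
  proof
    fix w :: complex assume w: "w \<in> ball 1 (2/3)"
    show "w \<in> OmegaNe \<union> V"
    proof (cases "w \<in> phiNe ` cball 0 1")
      case True
      then obtain v where v: "norm v \<le> 1" "w = phiNe v" by auto
      have "norm v \<noteq> 1"
        using norm_phiNe_minus_one_on_circle[of v] w v by (auto simp: dist_norm norm_minus_commute)
      then show ?thesis using v by (auto simp: OmegaNe_def)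
    qed (simp add: V_def)
  qed
  have "OmegaNe \<inter> V = {}"
    by (auto simp: V_def OmegaNe_def)
  moreover have "1 \<in> OmegaNe"
    unfolding OmegaNe_def by (rule image_eqI[of _ _ 0]) (auto simp: phiNe_def)
  ultimately have "V \<inter> ball 1 (2/3) = {}"
    using connectedD[OF connected_ball open_OmegaNe \<open>open V\<close>] cover by fastforce
  with cover show ?thesis by blast
qed

lemma norm_minus_one_less_imp_OmegaNe: "norm (w - 1) < 2/3 \<Longrightarrow> w \<in> OmegaNe"
  using ball_subset_OmegaNe by (auto simp: dist_norm norm_minus_commute)

text \<open>Since \<open>Im (phiNe (a + \<i> b)) = b (1 - a^2 + b^2/3)\<close>, the real points of \<Omega> are the values
  of \<open>1 + a - a^3/3\<close> on \<open>]-1, 1[\<close>, i.e. the interval \<open>]1/3, 5/3[\<close>.\<close>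
lemma of_real_notin_OmegaNe:
  fixes x :: real
  assumes "x \<le> 1/3 \<or> 5/3 \<le> x"
  shows "complex_of_real x \<notin> OmegaNe"
proof
  assume "complex_of_real x \<in> OmegaNe"
  then obtain a b where ab: "a^2 + b^2 < 1" "complex_of_real x = phiNe (Complex a b)"
    unfolding OmegaNe_def by (auto simp: cmod_def)
  have "b * (1 - a^2 + b^2/3) = Im (phiNe (Complex a b))"
    by (simp add: phiNe_def power3_eq_cube power2_eq_square algebra_simps) (simp add: field_simps)
  moreover have "0 < 1 - a^2 + b^2/3"
    using ab(1) zero_le_power2[of b] by linarith
  ultimately have "b = 0"
    using ab(2) by (metis Im_complex_of_real mult_eq_0_iff less_irrefl)
  then have x: "x = 1 + a - a^3/3"
    using arg_cong[OF ab(2), of Re] by (simp add: phiNe_def power3_eq_cube)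
  have "a^2 < 1"
    using ab(1) zero_le_power2[of b] by linarith
  then have "\<bar>a\<bar> < 1"
    by (simp add: abs_square_less_1)
  then have "0 < (a-1)^2 * (a+2)" "0 < (a+1)^2 * (2-a)"
    by auto
  moreover have "5/3 - x = (a-1)^2 * (a+2) / 3" "x - 1/3 = (a+1)^2 * (2-a) / 3"
    by (simp_all add: x power2_eq_square power3_eq_cube algebra_simps)
  ultimately show False
    using assms by linarith
qed

section \<open>Computing the radius\<close>

lemma Qf_image_ball_subset_OmegaNe:
  assumes \<phi>: "\<And>u. norm u < R \<Longrightarrow> \<phi> u \<in> OmegaNe" and "R \<le> 1" and f: "f \<in> Sstar \<phi>"
  shows "Qf f ` ball 0 R \<subseteq> OmegaNe"
proof
  fix y assume "y \<in> Qf f ` ball 0 R"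
  then obtain z where z: "norm z < R" "y = Qf f z" by auto
  from f obtain w where w: "w holomorphic_on ball 0 1" "w ` ball 0 1 \<subseteq> ball 0 1" "w 0 = 0"
    "\<forall>z\<in>ball 0 1. Qf f z = \<phi> (w z)"
    by (auto simp: Sstar_def subord_def)
  have "norm z < 1" using z \<open>R \<le> 1\<close> by linarith
  then have "norm (w z) \<le> norm z"
    using Schwarz_Lemma(1)[OF w(1) w(3)] w(2) by force
  then show "y \<in> OmegaNe"
    using \<phi> w(4) z \<open>norm z < 1\<close> by simp
qed

text \<open>The extremal function \<open>f z = z exp (\<integral>[0,z] (\<phi> t - 1) / t dt)\<close>.\<close>
lemma Sstar_extremal:
  assumes \<phi>: "\<phi> holomorphic_on ball 0 1" and \<phi>0: "\<phi> 0 = 1"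
  shows "\<exists>f\<in>Sstar \<phi>. \<forall>z\<in>ball 0 1. Qf f z = \<phi> z"
proof -
  define h where "h z = (if z = 0 then deriv \<phi> 0 else (\<phi> z - \<phi> 0) / (z - 0))" for z
  have h: "h holomorphic_on ball 0 1"
    unfolding h_def[abs_def] by (rule pole_lemma_open[OF \<phi> open_ball])
  have \<phi>_eq: "\<phi> z = 1 + z * h z" for z
    by (cases "z = 0") (simp_all add: h_def \<phi>0)
  obtain g where g_within: "\<And>x. x \<in> ball 0 1 \<Longrightarrow> (g has_field_derivative h x) (at x within ball 0 1)"
    using holomorphic_convex_primitive'[OF convex_ball open_ball h] by blast
  have g: "(g has_field_derivative h x) (at x)" if "x \<in> ball 0 1" for x
    using g_within[OF that] by (simp add: at_within_open[OF that open_ball])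
  define f where "f z = z * exp (g z - g 0)" for z
  have df: "(f has_field_derivative exp (g z - g 0) + z * h z * exp (g z - g 0)) (at z)"
    if "z \<in> ball 0 1" for z
    unfolding f_def[abs_def] by (rule derivative_eq_intros refl g[OF that] | simp)+
  have "f holomorphic_on ball 0 1"
    using df by (auto simp: holomorphic_on_open field_differentiable_def) blast
  moreover have "deriv f 0 = 1"
    using DERIV_imp_deriv[OF df[of 0]] by simp
  ultimately have "f \<in> classA"
    by (simp add: classA_def f_def)
  have Q: "Qf f z = \<phi> z" if "z \<in> ball 0 1" for z
    using DERIV_imp_deriv[OF df[OF that]] by (simp add: Qf_def f_def \<phi>_eq \<phi>0 field_simps)
  have "Qf f holomorphic_on ball 0 1"
    using holomorphic_transform[OF \<phi>] Q by simp
  then have "subord (Qf f) \<phi>"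
    unfolding subord_def using \<phi> Q by (intro conjI exI[of _ "\<lambda>z. z"]) auto
  then show ?thesis
    using \<open>f \<in> classA\<close> Q by (auto simp: Sstar_def)
qed

text \<open>Sharpness comes from the extremal function, for which \<open>Qf f = \<phi>\<close>.\<close>
lemma radiusNe_eqI:
  assumes "0 < R" "R \<le> 1" and \<phi>: "\<phi> holomorphic_on ball 0 1" "\<phi> 0 = 1"
    and inside: "\<And>u. norm u < R \<Longrightarrow> \<phi> u \<in> OmegaNe"
    and outside: "\<And>r. R < r \<Longrightarrow> r < 1 \<Longrightarrow> \<exists>z. norm z = r \<and> \<phi> z \<notin> OmegaNe"
  shows "radiusNe (Sstar \<phi>) = R"
  unfolding radiusNe_def
proof (rule Greatest_equality)
  show "R \<in> {0<..1} \<and> (\<forall>f\<in>Sstar \<phi>. Qf f ` ball 0 R \<subseteq> OmegaNe)"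
    using assms Qf_image_ball_subset_OmegaNe[OF inside] by auto
next
  fix \<rho> assume \<rho>: "\<rho> \<in> {0<..1} \<and> (\<forall>f\<in>Sstar \<phi>. Qf f ` ball 0 \<rho> \<subseteq> OmegaNe)"
  show "\<rho> \<le> R"
  proof (rule ccontr)
    assume "\<not> \<rho> \<le> R"
    then obtain z where z: "norm z = (R + \<rho>) / 2" "\<phi> z \<notin> OmegaNe"
      using outside[of "(R + \<rho>) / 2"] \<rho> by auto
    obtain f where "f \<in> Sstar \<phi>" "\<forall>z\<in>ball 0 1. Qf f z = \<phi> z"
      using Sstar_extremal[OF \<phi>] by blast
    then show False
      using \<rho> z \<open>\<not> \<rho> \<le> R\<close> by (force simp: image_subset_iff)
  qed
qed

lemma radiusNe_majorant_eqI:
  assumes "0 < R" "R < 1" and \<phi>: "\<phi> holomorphic_on ball 0 1" "\<phi> 0 = 1"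
    and g: "strict_mono_on {0..<1} g" "g R = 2/3"
    and majorant: "\<And>u. norm u < 1 \<Longrightarrow> norm (\<phi> u - 1) \<le> g (norm u)"
    and real: "\<And>x. 0 \<le> x \<Longrightarrow> x < 1 \<Longrightarrow> \<phi> (of_real x) = of_real (1 + g x)"
  shows "radiusNe (Sstar \<phi>) = R"
proof (rule radiusNe_eqI[OF \<open>0 < R\<close> _ \<phi>])
  fix u :: complex assume "norm u < R"
  then have "g (norm u) < g R"
    using assms by (intro strict_mono_onD[OF g(1)]) auto
  then have "g (norm u) < 2/3"
    using g(2) by simp
  then show "\<phi> u \<in> OmegaNe"
    using majorant[of u] \<open>norm u < R\<close> \<open>R < 1\<close> by (intro norm_minus_one_less_imp_OmegaNe) simp
next
  fix r :: real assume r: "R < r" "r < 1"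
  then have "g R < g r"
    using assms by (intro strict_mono_onD[OF g(1)]) auto
  then have "2/3 < g r"
    using g(2) by simp
  then have "\<phi> (of_real r) \<notin> OmegaNe"
    using real[of r] r assms of_real_notin_OmegaNe[of "1 + g r"] by simp
  then show "\<exists>z. norm z = r \<and> \<phi> z \<notin> OmegaNe"
    using r assms by (intro exI[of _ "of_real r"]) simp
qed (use assms in simp)

lemma sqrt2_bounds: "1.4142 < sqrt 2" "sqrt 2 < 1.4143"
proof -
  show "1.4142 < sqrt 2"
    by (rule real_less_rsqrt) (simp add: power2_eq_square)
  have "sqrt 2 < sqrt (1.4143^2)"
    by (simp only: real_sqrt_less_iff) (simp add: power2_eq_square)
  then show "sqrt 2 < 1.4143" by simp
qed

section \<open>The cardioid class\<close>

lemma radius_Sstar_phiC: "radiusNe (Sstar phiC) = sqrt 2 - 1"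
proof (rule radiusNe_majorant_eqI)
  let ?g = "\<lambda>t::real. 4/3 * t + 2/3 * t^2"
  show "strict_mono_on {0..<1} ?g"
    by (auto simp: strict_mono_on_def intro!: add_strict_mono power_strict_mono)
  show "?g (sqrt 2 - 1) = 2/3"
    by (simp add: power2_eq_square algebra_simps) (simp add: field_simps)
  show "norm (phiC u - 1) \<le> ?g (norm u)" for u
  proof -
    have "phiC u - 1 = 4/3 * u + 2/3 * u^2"
      by (simp add: phiC_def)
    then show ?thesis
      using norm_triangle_ineq[of "4/3 * u" "2/3 * u^2"] by (simp add: norm_mult norm_power)
  qed
  show "phiC (of_real x) = of_real (1 + ?g x)" for x
    by (simp add: phiC_def)
  show "phiC holomorphic_on ball 0 1"
    unfolding phiC_def[abs_def] by (intro holomorphic_intros)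
qed (use sqrt2_bounds in \<open>auto simp: phiC_def\<close>)

section \<open>The class S*_R\<close>

lemma radius_Sstar_phi0: "radiusNe (Sstar phi0) = 1 / (3 * sqrt 2 - 3)"
proof -
  define k where "k = sqrt 2 + 1"
  have k: "1 < k" "k < 3"
    using sqrt2_bounds by (auto simp: k_def)
  have phi0_eq: "phi0 u = 1 + u / of_real k * ((of_real k + u) / (of_real k - u))" for u
    by (simp add: phi0_def k_def Let_def)
  let ?g = "\<lambda>t. t / k * ((k + t) / (k - t))"
  have "radiusNe (Sstar phi0) = k / 3"
  proof (rule radiusNe_majorant_eqI)
    have "of_real k - u \<noteq> 0" if "u \<in> ball 0 1" for u :: complex
      using that k by (auto simp: dist_norm)
    then have "(\<lambda>u. 1 + u / of_real k * ((of_real k + u) / (of_real k - u))) holomorphic_on ball 0 1"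
      using k by (intro holomorphic_intros) auto
    moreover have "phi0 = (\<lambda>u. 1 + u / of_real k * ((of_real k + u) / (of_real k - u)))"
      using phi0_eq by blast
    ultimately show "phi0 holomorphic_on ball 0 1"
      by simp
    show "strict_mono_on {0..<1} ?g"
    proof (rule strict_mono_onI)
      fix t s :: real assume "t \<in> {0..<1}" "s \<in> {0..<1}" "t < s"
      with k show "?g t < ?g s"
        by (intro mult_strict_mono frac_less divide_strict_right_mono) auto
    qed
    show "?g (k / 3) = 2/3"
      using k by (simp add: field_simps)
    show "norm (phi0 u - 1) \<le> ?g (norm u)" if "norm u < 1" for u
    proof -
      have "norm (of_real k + u) \<le> k + norm u" "k - norm u \<le> norm (of_real k - u)"
        using norm_triangle_ineq[of "of_real k" u] norm_triangle_ineq2[of "of_real k" u] k by auto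
      then show ?thesis
        using k that by (auto simp: phi0_eq norm_mult norm_divide intro!: mult_left_mono frac_le)
    qed
    show "phi0 (of_real x) = of_real (1 + ?g x)" for x
      by (simp add: phi0_eq)
  qed (use k in \<open>auto simp: phi0_eq\<close>)
  moreover have "k / 3 = 1 / (3 * sqrt 2 - 3)"
  proof -
    have "(3 * sqrt 2 - 3) * k = 3"
      by (simp add: k_def algebra_simps)
    then show ?thesis
      using k by (simp add: field_simps)
  qed
  ultimately show ?thesis by simp
qed

section \<open>The class S*_RL\<close>

definition mobRL :: "complex \<Rightarrow> complex" where
  "mobRL z = (1 - z) / (1 + of_real (2 * sqrt 2 - 2) * z)"

lemma phiRL_eq_mobRL: "phiRL z = sqrt 2 - (sqrt 2 - 1) * csqrt (mobRL z)"
  by (simp add: phiRL_def mobRL_def algebra_simps)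

lemma moebius_denominator_nonzero:
  fixes c :: real and z :: complex
  assumes "\<bar>c\<bar> \<le> 1" "norm z < 1"
  shows "1 + of_real c * z \<noteq> 0"
proof
  assume "1 + of_real c * z = 0"
  then have "of_real c * z = -1"
    by (simp add: eq_neg_iff_add_eq_0 add.commute)
  moreover have "\<bar>c\<bar> * norm z \<le> norm z"
    using assms by (intro mult_left_le_one_le) auto
  then have "norm (of_real c * z) < 1"
    using assms by (simp add: norm_mult)
  ultimately show False
    by simp
qed

lemma Re_moebius_pos:
  fixes c :: real
  assumes c: "0 < c" "c < 1" and z: "norm z < 1"
  shows "0 < Re ((1 - z) / (1 + of_real c * z))"
proof -
  obtain s t where st: "z = Complex s t"
    by (cases z)
  have n: "s^2 + t^2 < 1"
    using z by (simp add: st cmod_def)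
  then have "s^2 < 1"
    using zero_le_power2[of t] by linarith
  then have "(1 - c) * s < 1 - c"
    using c by (simp add: abs_square_less_1)
  moreover have "c * (s^2 + t^2) < c"
    using n c by simp
  moreover have "Re ((1 - z) / (1 + of_real c * z))
      = (1 + c * s - s - c * (s^2 + t^2)) / ((Re (1 + of_real c * z))^2 + (Im (1 + of_real c * z))^2)"
    by (simp add: Re_divide st algebra_simps power2_eq_square)
  moreover have "0 < (Re (1 + of_real c * z))^2 + (Im (1 + of_real c * z))^2"
    using moebius_denominator_nonzero[of c z] c z
    by (simp add: complex_eq_iff sum_power2_gt_zero_iff del: of_real_mult)
  ultimately show ?thesis
    by (simp add: algebra_simps)
qed

lemma phiRL_holomorphic: "phiRL holomorphic_on ball 0 1"
proof -
  have c: "0 < 2 * sqrt 2 - 2" "2 * sqrt 2 - 2 < 1"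
    using sqrt2_bounds by auto
  have "mobRL holomorphic_on ball 0 1"
    unfolding mobRL_def[abs_def]
    using moebius_denominator_nonzero[of "2 * sqrt 2 - 2"] c
    by (intro holomorphic_intros) auto
  moreover have "mobRL z \<notin> \<real>\<^sub>\<le>\<^sub>0" if "z \<in> ball 0 1" for z
    using Re_moebius_pos[OF c, of z] that by (auto simp: mobRL_def complex_nonpos_Reals_iff)
  ultimately show ?thesis
    unfolding phiRL_eq_mobRL[abs_def] by (intro holomorphic_intros)
qed

lemma phiRL_0: "phiRL 0 = 1"
  by (simp add: phiRL_def)

lemma norm_one_minus_csqrt_sq:
  "(norm (1 - csqrt z))^2 = 1 + norm z - 2 * sqrt ((norm z + Re z) / 2)"
proof -
  have "(norm (1 - w))^2 = 1 - 2 * Re w + (norm w)^2" for w :: complex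
    unfolding cmod_power2 by (simp add: power2_eq_square algebra_simps)
  from this[of "csqrt z"] show ?thesis
    by simp
qed

text \<open>With \<open>\<zeta> = mobRL u\<close> we have \<open>u = (1 - \<zeta>) / (1 + c \<zeta>)\<close>, so \<open>|u| < R\<close> reads
  \<open>|1 - \<zeta>|^2 < R^2 |1 + c \<zeta>|^2\<close>; multiplied by \<open>823^2\<close> this is the quadratic inequality below.\<close>
lemma mobRL_quadratic_ineq:
  assumes u: "norm u < (488 + 164 * sqrt 2) / 823"
  shows "(414720 * sqrt 2 - 264879) * (norm (mobRL u))^2
    - 2 * (733713 + 263744 * sqrt 2) * Re (mobRL u) + (385393 - 160064 * sqrt 2) < 0"
proof -
  define q where "q = sqrt 2"
  have q2: "q * q = 2" and q3: "q * (q * z) = 2 * z" for z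
    by (simp_all add: q_def mult.assoc[symmetric])
  have qb: "1.4142 < q" "q < 1.4143"
    using sqrt2_bounds by (auto simp: q_def)
  define c where "c = 2 * q - 2"
  define R where "R = (488 + 164 * q) / 823"
  define \<zeta> where "\<zeta> = mobRL u"
  have "norm u < 1"
    using u qb by (simp add: q_def)
  then have "1 + of_real c * u \<noteq> 0"
    using qb by (intro moebius_denominator_nonzero) (auto simp: c_def)
  then have "\<zeta> * (1 + of_real c * u) = 1 - u"
    by (simp add: \<zeta>_def mobRL_def c_def q_def)
  then have u_eq: "u * (1 + of_real c * \<zeta>) = 1 - \<zeta>"
    by (simp add: algebra_simps)
  have "1 + of_real c * \<zeta> \<noteq> 0"
  proof
    assume "1 + of_real c * \<zeta> = 0"
    then have "\<zeta> = 1" and "of_real (1 + c) = (0 :: complex)"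
      using u_eq by simp_all
    then show False
      using qb by (simp only: of_real_eq_0_iff) (simp add: c_def)
  qed
  then have "norm (1 - \<zeta>) < R * norm (1 + of_real c * \<zeta>)"
    using u by (simp add: u_eq[symmetric] norm_mult R_def q_def)
  then have "(norm (1 - \<zeta>))^2 < (R * norm (1 + of_real c * \<zeta>))^2"
    by (rule power_strict_mono) auto
  moreover have "(norm (1 - \<zeta>))^2 = 1 - 2 * Re \<zeta> + (norm \<zeta>)^2"
    "(norm (1 + of_real c * \<zeta>))^2 = 1 + 2 * c * Re \<zeta> + c^2 * (norm \<zeta>)^2"
    unfolding cmod_power2 by (simp_all add: power2_eq_square algebra_simps)
  ultimately have "677329 * (1 - 2 * Re \<zeta> + (norm \<zeta>)^2)
      < (677329 * R^2) * (1 + 2 * c * Re \<zeta> + c^2 * (norm \<zeta>)^2)"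
    by (simp add: power_mult_distrib)
  also have "677329 * R^2 = 291936 + 160064 * q"
    by (simp add: R_def power2_eq_square algebra_simps q2 q3)
  finally have ineq: "677329 * (1 - 2 * Re \<zeta> + (norm \<zeta>)^2)
      < (291936 + 160064 * q) * (1 + 2 * c * Re \<zeta> + c^2 * (norm \<zeta>)^2)" .
  have "677329 * (1 - 2 * x + \<rho>^2) - (291936 + 160064 * q) * (1 + 2 * c * x + c^2 * \<rho>^2)
      = (414720 * q - 264879) * \<rho>^2 - 2 * (733713 + 263744 * q) * x + (385393 - 160064 * q)"
    for x \<rho> :: real
    by (simp add: c_def power2_eq_square algebra_simps q2 q3)
  from this[of "Re \<zeta>" "norm \<zeta>"] ineq show ?thesis
    by (simp add: \<zeta>_def q_def)
qed

text \<open>The bound \<open>|1 - \<surd>\<zeta>| < 2 (\<surd>2 + 1) / 3\<close> on the disc of \<open>mobRL_quadratic_ineq\<close>, squared and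
  written in polar data \<open>\<rho> = |\<zeta>|\<close>, \<open>x = Re \<zeta>\<close>. The quadratic in \<open>\<rho>\<close> has roots \<open>a < b\<close>, which
  gives \<open>\<rho> < b\<close>; the remaining case is a second factorisation.\<close>
lemma RL_real_bound:
  fixes x \<rho> :: real
  assumes "x \<le> \<rho>"
    and quad: "(414720 * sqrt 2 - 264879) * \<rho>^2 - 2 * (733713 + 263744 * sqrt 2) * x
      + (385393 - 160064 * sqrt 2) < 0"
  shows "1 + \<rho> - 2 * sqrt ((\<rho> + x) / 2) < 4/3 + 8 * sqrt 2 / 9"
proof -
  define q where "q = sqrt 2"
  have q2: "q * q = 2" and q3: "q * (q * z) = 2 * z" for z
    by (simp_all add: q_def mult.assoc[symmetric])
  have qb: "1.4142 < q" "q < 1.4143"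
    using sqrt2_bounds by (auto simp: q_def)
  define al where "al = 414720 * q - 264879"
  define be where "be = 733713 + 263744 * q"
  define ga where "ga = 385393 - 160064 * q"
  have pos: "0 < al" "0 < be" "0 < ga"
    using qb by (auto simp: al_def be_def ga_def)
  have Hc: "al * \<rho>^2 - 2 * be * x + ga < 0"
    using quad by (simp add: al_def be_def ga_def q_def)
  define a where "a = -463/713 + 364/713 * q"
  define b where "b = 11/3 + 20/9 * q"
  have "al * ((\<rho> - a) * (\<rho> - b)) = al * \<rho>^2 - 2 * be * \<rho> + ga"
    unfolding al_def be_def ga_def a_def b_def by (simp add: algebra_simps power2_eq_square q2 q3)
  also have "\<dots> \<le> al * \<rho>^2 - 2 * be * x + ga"
    using \<open>x \<le> \<rho>\<close> pos by simp
  finally have "al * ((\<rho> - a) * (\<rho> - b)) < 0"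
    using Hc by linarith
  then have "(\<rho> - a) * (\<rho> - b) < 0"
    using pos by (simp add: mult_less_0_iff)
  moreover have "a < b"
    using qb by (simp add: a_def b_def)
  ultimately have "\<rho> < b"
    by (auto simp: mult_less_0_iff)
  have "0 < al * \<rho>^2 + ga"
    using pos by (simp add: add_nonneg_pos)
  then have "0 < be * x"
    using Hc by linarith
  then have "0 < x"
    using pos by (simp add: zero_less_mult_iff)
  show ?thesis
  proof (cases "\<rho> \<le> 1/3 + 8 * q / 9")
    case True
    have "0 < sqrt ((\<rho> + x) / 2)"
      using \<open>0 < x\<close> \<open>x \<le> \<rho>\<close> by simp
    with True show ?thesis
      unfolding q_def by linarith
  next
    case False
    define t where "t = 1 + \<rho> - (4/3 + 8 * q / 9)"
    define e where "e = 3/392 + 1213/3528 * q"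
    define A where "A = 998592 - 150976 * q"
    have "0 < A" "e < 1/3 + 8 * q / 9"
      using qb by (auto simp: A_def e_def)
    then have "A * ((\<rho> - b) * (\<rho> - e)) < 0"
      using False \<open>\<rho> < b\<close> by (simp add: mult_pos_neg mult_neg_pos)
    moreover have "be * t^2 - 2 * be * \<rho> - al * \<rho>^2 - ga = A * ((\<rho> - b) * (\<rho> - e))"
      unfolding t_def al_def be_def ga_def A_def b_def e_def
      by (simp add: algebra_simps power2_eq_square q2 q3) (simp add: field_simps)
    ultimately have "be * t^2 < be * (2 * (\<rho> + x))"
      using Hc by (simp add: algebra_simps)
    then have "t < sqrt (2 * (\<rho> + x))"
      using pos by (intro real_less_rsqrt) simp
    also have "sqrt (2 * (\<rho> + x)) = sqrt (2^2 * ((\<rho> + x) / 2))"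
      by simp
    also have "\<dots> = 2 * sqrt ((\<rho> + x) / 2)"
      by (simp only: real_sqrt_mult) simp
    finally show ?thesis
      by (simp add: t_def q_def)
  qed
qed

lemma norm_phiRL_minus_one_less:
  assumes u: "norm u < (488 + 164 * sqrt 2) / 823"
  shows "norm (phiRL u - 1) < 2/3"
proof -
  define q where "q = sqrt 2"
  have qb: "1.4142 < q" "q < 1.4143"
    using sqrt2_bounds by (auto simp: q_def)
  define s where "s = csqrt (mobRL u)"
  have "(norm (1 - s))^2 < 4/3 + 8 * q / 9"
    unfolding s_def norm_one_minus_csqrt_sq q_def
    by (intro RL_real_bound complex_Re_le_cmod mobRL_quadratic_ineq u)
  also have "4/3 + 8 * q / 9 = (2 * (q + 1) / 3)^2"
    by (simp add: power2_eq_square algebra_simps q_def)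
  finally have "norm (1 - s) < 2 * (q + 1) / 3"
    by (rule power_less_imp_less_base) (use qb in simp)
  moreover have "phiRL u - 1 = of_real (q - 1) * (1 - s)"
    by (simp add: phiRL_eq_mobRL s_def q_def algebra_simps)
  then have "norm (phiRL u - 1) = (q - 1) * norm (1 - s)"
    using qb by (simp only: norm_mult norm_of_real) simp
  ultimately have "norm (phiRL u - 1) < (q - 1) * (2 * (q + 1) / 3)"
    using qb by simp
  also have "\<dots> = 2/3"
    by (simp add: algebra_simps q_def)
  finally show ?thesis .
qed

lemma phiRL_neg_real:
  assumes "0 \<le> r" "r < 1"
  shows "phiRL (of_real (-r))
    = of_real (sqrt 2 - (sqrt 2 - 1) * sqrt ((1 + r) / (1 - (2 * sqrt 2 - 2) * r)))"
proof -
  define c where "c = 2 * sqrt 2 - 2"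
  have "c * r \<le> c" "c < 1"
    using assms sqrt2_bounds by (auto simp: c_def mult_left_le)
  then have "0 < 1 - c * r"
    by linarith
  have "mobRL (of_real (-r)) = of_real ((1 + r) / (1 - c * r))"
    by (simp add: mobRL_def c_def)
  moreover have "csqrt (of_real ((1 + r) / (1 - c * r))) = of_real (sqrt ((1 + r) / (1 - c * r)))"
    using \<open>0 < 1 - c * r\<close> assms by (intro of_real_sqrt[symmetric]) simp
  ultimately show ?thesis
    by (simp only: phiRL_eq_mobRL) (simp add: c_def)
qed

text \<open>On the negative axis \<open>phiRL\<close> is real and decreases to \<open>1/3\<close> at \<open>-R\<close>, where
  \<open>mobRL (-R) = ((5 + 2\<surd>2) / 3)^2\<close>.\<close>
lemma phiRL_neg_real_notin_OmegaNe:
  assumes r: "(488 + 164 * sqrt 2) / 823 < r" "r < 1"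
  shows "phiRL (of_real (-r)) \<notin> OmegaNe"
proof -
  define q where "q = sqrt 2"
  have q2: "q * q = 2" and q3: "q * (q * z) = 2 * z" for z
    by (simp_all add: q_def mult.assoc[symmetric])
  have qb: "1.4142 < q" "q < 1.4143"
    using sqrt2_bounds by (auto simp: q_def)
  define c where "c = 2 * q - 2"
  define R where "R = (488 + 164 * q) / 823"
  define b where "b = (33 + 20 * q) / 9"
  have "0 < R" "R < r"
    using r qb by (simp_all add: R_def q_def)
  have "c * r \<le> c" "c < 1"
    using \<open>0 < R\<close> \<open>R < r\<close> r qb by (auto simp: c_def mult_left_le)
  then have "0 < 1 - c * r"
    by linarith
  have "R * (1 + b * c) = b - 1"
    by (simp add: R_def b_def c_def algebra_simps q2 q3) (simp add: field_simps)
  moreover have "R * (1 + b * c) \<le> r * (1 + b * c)"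
    using \<open>R < r\<close> qb by (intro mult_right_mono) (auto simp: b_def c_def)
  ultimately have "b * (1 - c * r) \<le> 1 + r"
    by (simp add: algebra_simps)
  then have "b \<le> (1 + r) / (1 - c * r)"
    using \<open>0 < 1 - c * r\<close> by (simp add: pos_le_divide_eq)
  then have "sqrt b \<le> sqrt ((1 + r) / (1 - c * r))"
    by (rule real_sqrt_le_mono)
  moreover have "sqrt b = (5 + 2 * q) / 3"
  proof -
    have "b = ((5 + 2 * q) / 3)^2"
      by (simp add: b_def power2_eq_square algebra_simps q2 q3)
    then show ?thesis
      using qb by simp
  qed
  ultimately have "(5 + 2 * q) / 3 \<le> sqrt ((1 + r) / (1 - c * r))"
    by simp
  then have "(q - 1) * ((5 + 2 * q) / 3) \<le> (q - 1) * sqrt ((1 + r) / (1 - c * r))"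
    using qb by (intro mult_left_mono) auto
  moreover have "(q - 1) * ((5 + 2 * q) / 3) = q - 1/3"
    by (simp add: algebra_simps q2 q3) (simp add: field_simps)
  ultimately have "q - (q - 1) * sqrt ((1 + r) / (1 - c * r)) \<le> 1/3"
    by simp
  moreover have "phiRL (of_real (-r)) = of_real (q - (q - 1) * sqrt ((1 + r) / (1 - c * r)))"
    unfolding c_def q_def using \<open>0 < R\<close> \<open>R < r\<close> r by (intro phiRL_neg_real) auto
  ultimately show ?thesis
    by (metis of_real_notin_OmegaNe)
qed

lemma radius_Sstar_phiRL: "radiusNe (Sstar phiRL) = 56 / (122 - 41 * sqrt 2)"
proof -
  have "radiusNe (Sstar phiRL) = (488 + 164 * sqrt 2) / 823"
  proof (rule radiusNe_eqI[OF _ _ phiRL_holomorphic phiRL_0])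
    show "phiRL u \<in> OmegaNe" if "norm u < (488 + 164 * sqrt 2) / 823" for u
      using norm_phiRL_minus_one_less[OF that] by (rule norm_minus_one_less_imp_OmegaNe)
    show "\<exists>z. norm z = r \<and> phiRL z \<notin> OmegaNe"
      if "(488 + 164 * sqrt 2) / 823 < r" "r < 1" for r
      using phiRL_neg_real_notin_OmegaNe[OF that] that sqrt2_bounds
      by (intro exI[of _ "of_real (-r)"]) auto
  qed (use sqrt2_bounds in auto)
  moreover have "(488 + 164 * sqrt 2) / 823 = 56 / (122 - 41 * sqrt 2)"
  proof -
    have "(122 - 41 * sqrt 2) * (488 + 164 * sqrt 2) = 56 * 823"
      by (simp add: algebra_simps)
    moreover have "122 - 41 * sqrt 2 \<noteq> 0"
      using sqrt2_bounds by simp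
    ultimately show ?thesis
      by (simp add: field_simps)
  qed
  ultimately show ?thesis
    by simp
qed

theorem mainTheorem7:
  shows "radiusNe (Sstar phiRL) = 56 / (122 - 41 * sqrt 2)
       \<and> radiusNe (Sstar phiC) = sqrt 2 - 1
       \<and> radiusNe (Sstar phi0) = 1 / (3 * sqrt 2 - 3)"
  using radius_Sstar_phiRL radius_Sstar_phiC radius_Sstar_phi0 by blast

end
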